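(* Let $f : \widehat{\mathbb{Z}} \to \widehat{\mathbb{Z}}$ be a continuous map, $P$ a period map of $f$, and let $k, m, n \in \mathbb{N}$ satisfy $m = P^k(n) = P^{k+1}(n)$. Let $K$ be the preperiod length and $L$ the period of the reduction $f_m : \mathbb{Z}/m\mathbb{Z} \to \mathbb{Z}/m\mathbb{Z}$. Then for all $s, t \in \widehat{\mathbb{Z}}$ and $u, v \in \mathbb{N}$, if $s \equiv_m t$, $u, v \ge k + K$ and $u \equiv_L v$, then $f^u(s) \equiv_n f^v(t)$.
   Context: $\mathbb{N} = \{1,2,\dots\}$, $\widehat{\mathbb{Z}} = \varprojlim_n \mathbb{Z}/n\mathbb{Z}$; for $s,t \in \widehat{\mathbb{Z}}$, $s \equiv_n t$ means $s - t \in n\widehat{\mathbb{Z}}$; $f^u$ and $P^k$ denote iterates. A map $P:\mathbb{N} \to \mathbb{N}$ is a period map of $f$ if $s \equiv_{P(n)} t$ implies $f(s) \equiv_n f(t)$ for all $s,t,n$; then $f$ induces reductions $f_n : \mathbb{Z}/P(n)\mathbb{Z} \to \mathbb{Z}/n\mathbb{Z}$, and since $P(m) = m$, $f_m$ is a self-map of $\mathbb{Z}/m\mathbb{Z}$. For a self-map $\sigma$ of a finite set $F$ and $y \in F$, the tail length $k_y$ and cycle length $l_y$ are the unique integers $k_y \ge 0$, $l_y \ge 1$ such that for $k' \ge 0, l' \ge 1$: $\sigma^{k'}(y) = \sigma^{k'+l'}(y)$ iff $k_y \le k'$ and $l_y \mid l'$. The preperiod length of $\sigma$ is $\max_y k_y$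 and the period of $\sigma$ is $\operatorname{lcm}_y l_y$. *)

theory Defs
  imports Complex_Main
begin

text \<open>The profinite integers as the inverse limit of the rings Z/nZ (n >= 1):
  compatible families (x_n), x_n in {0..<n} representing a residue mod n.
  The value at index 0 is normalised to 0 and is irrelevant.\<close>

typedef zhat = "{x :: nat \<Rightarrow> int. x 0 = 0 \<and> (\<forall>n>0. 0 \<le> x n \<and> x n < int n) \<and>
   (\<forall>m n. 0 < m \<and> 0 < n \<and> n dvd m \<longrightarrow> x m mod int n = x n)}"
  by (rule exI[of _ "\<lambda>_. 0"]) auto

definition zcong :: "nat \<Rightarrow> zhat \<Rightarrow> zhat \<Rightarrow> bool" where
  "zcong n s t \<longleftrightarrow> Rep_zhat s n = Rep_zhat t n"

lemma zcong_mult_left: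
  assumes "0 < a" "0 < b" "zcong (a * b) s t" shows "zcong a s t"
proof -
  have "\<And>x. Rep_zhat x (a*b) mod int a = Rep_zhat x a"
    using Rep_zhat assms(1,2) by auto
  then show ?thesis using assms(3) unfolding zcong_def by metis
qed

lemma zcong_mult_right:
  assumes "0 < a" "0 < b" "zcong (a * b) s t" shows "zcong b s t"
  using zcong_mult_left[of b a s t] assms by (simp add: mult.commute)

text \<open>Profinite topology: basic opens are residue classes s + n Zhat.\<close>
instantiation zhat :: topological_space
begin
definition open_zhat :: "zhat set \<Rightarrow> bool" where
  "open_zhat U \<longleftrightarrow> (\<forall>x\<in>U. \<exists>n>0. {y. zcong n y x} \<subseteq> U)"
instance
proof
  show "open (UNIV :: zhat set)" unfolding open_zhat_def by auto
next
  fix S T :: "zhat set" assume S: "open S" and T: "open T"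
  show "open (S \<inter> T)" unfolding open_zhat_def
  proof
    fix x assume "x \<in> S \<inter> T"
    then obtain a b where a: "a > 0" "{y. zcong a y x} \<subseteq> S"
      and b: "b > 0" "{y. zcong b y x} \<subseteq> T"
      using S T unfolding open_zhat_def by blast
    have H: "{y. zcong (a*b) y x} \<subseteq> S \<inter> T"
      using a b zcong_mult_left[OF a(1) b(1)] zcong_mult_right[OF a(1) b(1)] by blast
    have "0 < a * b" using a(1) b(1) by (rule mult_pos_pos)
    with H show "\<exists>n>0. {y. zcong n y x} \<subseteq> S \<inter> T" by blast
  qed
next
  fix K :: "zhat set set" assume K: "\<forall>S\<in>K. open S"
  show "open (\<Union>K)" unfolding open_zhat_def
  proof
    fix x assume "x \<in> \<Union>K"
    then obtain S where S: "S \<in> K" "x \<in> S" by (rule UnionE)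
    then have "open S" using K by simp
    then obtain n where "n > 0" "{y. zcong n y x} \<subseteq> S"
      using S(2) unfolding open_zhat_def by auto
    then show "\<exists>n>0. {y. zcong n y x} \<subseteq> \<Union>K" using S(1) by auto
  qed
qed
end

definition period_map :: "(zhat \<Rightarrow> zhat) \<Rightarrow> (nat \<Rightarrow> nat) \<Rightarrow> bool" where
  "period_map f P \<longleftrightarrow> (\<forall>n>0. P n > 0) \<and>
     (\<forall>s t n. n > 0 \<longrightarrow> zcong (P n) s t \<longrightarrow> zcong n (f s) (f t))"

definition zhat_of_int :: "int \<Rightarrow> zhat" where
  "zhat_of_int a = Abs_zhat (\<lambda>n. if n = 0 then 0 else a mod int n)"

text \<open>Reduction f_m : Z/mZ \<rightarrow> Z/mZ (when P m = m), with Z/mZ represented by {0..<m}.\<close>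
definition reduction :: "(zhat \<Rightarrow> zhat) \<Rightarrow> nat \<Rightarrow> int \<Rightarrow> int" where
  "reduction f m a = Rep_zhat (f (zhat_of_int a)) m"

definition tail_cycle :: "('a \<Rightarrow> 'a) \<Rightarrow> 'a \<Rightarrow> nat \<times> nat" where
  "tail_cycle \<sigma> y = (THE (k, l). l \<ge> 1 \<and>
     (\<forall>k' l'. l' \<ge> 1 \<longrightarrow> ((\<sigma> ^^ k') y = (\<sigma> ^^ (k' + l')) y \<longleftrightarrow> k \<le> k' \<and> l dvd l')))"

definition preperiod_length :: "('a \<Rightarrow> 'a) \<Rightarrow> 'a set \<Rightarrow> nat" where
  "preperiod_length \<sigma> F = Max ((\<lambda>y. fst (tail_cycle \<sigma> y)) ` F)"

definition period_of :: "('a \<Rightarrow> 'a) \<Rightarrow> 'a set \<Rightarrow> nat" where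
  "period_of \<sigma> F = Lcm ((\<lambda>y. snd (tail_cycle \<sigma> y)) ` F)"

end

theory Submission
  imports Defs "HOL-Number_Theory.Cong"
begin

text \<open>Since P m = m, reduction modulo m commutes with f: the residue of f^j(s) modulo m is
  the f_m-orbit of the residue of s. Past the preperiod K, the f_m-orbit of any point depends
  only on the exponent modulo L, so f^(u-k)(s) and f^(v-k)(t) agree modulo m = P^k(n), and
  applying f k more times turns this into a congruence modulo n.\<close>

lemma funpow_shift_eq:
  fixes f :: "'a \<Rightarrow> 'a"
  assumes "(f ^^ a) x = (f ^^ b) x"
  shows "(f ^^ (a + d)) x = (f ^^ (b + d)) x"
proof -
  have "(f ^^ (c + d)) x = (f ^^ d) ((f ^^ c) x)" for c
    by (subst add.commute) (simp add: funpow_add)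
  then show ?thesis
    using assms by simp
qed

lemma funpow_add_diff:
  fixes f :: "'a \<Rightarrow> 'a"
  assumes "k \<le> w"
  shows "(f ^^ w) x = (f ^^ k) ((f ^^ (w - k)) x)"
proof -
  have "(f ^^ (k + (w - k))) x = (f ^^ k) ((f ^^ (w - k)) x)"
    by (simp add: funpow_add)
  with assms show ?thesis
    by simp
qed

lemma funpow_periodic:
  fixes f :: "'a \<Rightarrow> 'a"
  assumes "(f ^^ (a + l)) x = (f ^^ a) x" "a \<le> b"
  shows "(f ^^ (b + q * l)) x = (f ^^ b) x"
proof (induction q)
  case (Suc q)
  have "(f ^^ (a + l + (b + q * l - a))) x = (f ^^ (a + (b + q * l - a))) x"
    using funpow_shift_eq[OF assms(1)] .
  moreover have "a + l + (b + q * l - a) = b + Suc q * l" "a + (b + q * l - a) = b + q * l"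
    using assms(2) by auto
  ultimately show ?case using Suc by simp
qed simp

lemma funpow_finite_orbit_returns:
  fixes f :: "'a \<Rightarrow> 'a"
  assumes "finite (range (\<lambda>i. (f ^^ i) x))"
  obtains a l where "1 \<le> l" "(f ^^ (a + l)) x = (f ^^ a) x"
proof -
  have "\<not> inj (\<lambda>i. (f ^^ i) x)"
    using assms finite_imageD infinite_UNIV_nat by blast
  then obtain i j where "i < j" "(f ^^ i) x = (f ^^ j) x"
    unfolding inj_def by (metis linorder_neqE_nat)
  then have "1 \<le> j - i" "(f ^^ (i + (j - i))) x = (f ^^ i) x"
    by simp_all
  then show ?thesis
    by (rule that)
qed

lemma funpow_cycle_length_dvd:
  fixes f :: "'a \<Rightarrow> 'a"
  assumes "1 \<le> l" and cycle: "(f ^^ (k + l)) x = (f ^^ k) x"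
    and minimal: "\<And>r. 1 \<le> r \<Longrightarrow> (f ^^ (k + r)) x = (f ^^ k) x \<Longrightarrow> l \<le> r"
    and "k \<le> k'" and return: "(f ^^ (k' + l')) x = (f ^^ k') x"
  shows "l dvd l'"
proof -
  define r where "r = l' mod l"
  have "r < l" unfolding r_def using \<open>1 \<le> l\<close> by simp
  have "(f ^^ (k' + r)) x = (f ^^ (k' + r + (l' div l) * l)) x"
    using funpow_periodic[OF cycle, of "k' + r" "l' div l"] \<open>k \<le> k'\<close> by simp
  also have "k' + r + (l' div l) * l = k' + l'"
    unfolding r_def by simp
  finally have "(f ^^ (k' + r)) x = (f ^^ k') x"
    using return by simp
  \<comment> \<open>shift the return at k' by j, where k' + j = k + k' * l, to get a return at k\<close>
  define j where "j = k + k' * l - k'"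
  have "k' \<le> k' * l" using \<open>1 \<le> l\<close> by simp
  then have j: "k' + j = k + k' * l"
    unfolding j_def by linarith
  have "(f ^^ (k + r)) x = (f ^^ (k + r + k' * l)) x"
    using funpow_periodic[OF cycle, of "k + r" k'] by simp
  also have "k + r + k' * l = k' + j + r"
    using j by linarith
  also have "(f ^^ (k' + j + r)) x = (f ^^ (k' + r + j)) x"
    by (simp only: add.commute add.left_commute)
  also have "\<dots> = (f ^^ (k' + j)) x"
    using funpow_shift_eq[OF \<open>(f ^^ (k' + r)) x = (f ^^ k') x\<close>, of j] .
  also have "\<dots> = (f ^^ k) x"
    unfolding j using funpow_periodic[OF cycle, of k k'] by simp
  finally have "r = 0"
    using minimal[of r] \<open>r < l\<close> by (cases "1 \<le> r") auto
  then show ?thesis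
    unfolding r_def by auto
qed

definition is_tail_cycle :: "('a \<Rightarrow> 'a) \<Rightarrow> 'a \<Rightarrow> nat \<Rightarrow> nat \<Rightarrow> bool" where
  "is_tail_cycle f x k l \<longleftrightarrow> 1 \<le> l \<and>
     (\<forall>k' l'. 1 \<le> l' \<longrightarrow> ((f ^^ k') x = (f ^^ (k' + l')) x \<longleftrightarrow> k \<le> k' \<and> l dvd l'))"

lemma is_tail_cycle_unique:
  fixes f :: "'a \<Rightarrow> 'a"
  assumes "is_tail_cycle f x k l" "is_tail_cycle f x k' l'"
  shows "k = k' \<and> l = l'"
proof -
  have "k' \<le> k \<and> l' dvd l" "k \<le> k' \<and> l dvd l'"
    using assms unfolding is_tail_cycle_def by (metis dvd_refl order_refl)+
  then show ?thesis by (simp add: dvd_antisym)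
qed

lemma tail_cycle_eqI:
  fixes f :: "'a \<Rightarrow> 'a"
  assumes "is_tail_cycle f x k l"
  shows "tail_cycle f x = (k, l)"
proof -
  have "tail_cycle f x = (THE (k, l). is_tail_cycle f x k l)"
    unfolding tail_cycle_def is_tail_cycle_def ..
  also have "\<dots> = (k, l)"
  proof (rule the_equality)
    show "case (k, l) of (k, l) \<Rightarrow> is_tail_cycle f x k l"
      using assms by simp
    show "p = (k, l)" if "case p of (k', l') \<Rightarrow> is_tail_cycle f x k' l'" for p
      using that is_tail_cycle_unique[OF _ assms] by (cases p) simp
  qed
  finally show ?thesis .
qed

lemma is_tail_cycle_exists:
  fixes f :: "'a \<Rightarrow> 'a"
  assumes "finite (range (\<lambda>i. (f ^^ i) x))"
  shows "\<exists>k l. is_tail_cycle f x k l"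
proof -
  define returns where "returns a \<longleftrightarrow> (\<exists>l. 1 \<le> l \<and> (f ^^ (a + l)) x = (f ^^ a) x)" for a
  define k where "k = (LEAST a. returns a)"
  define l where "l = (LEAST l. 1 \<le> l \<and> (f ^^ (k + l)) x = (f ^^ k) x)"
  obtain a where "returns a"
    using funpow_finite_orbit_returns[OF assms] unfolding returns_def by blast
  then have "returns k"
    unfolding k_def by (rule LeastI)
  then have l: "1 \<le> l \<and> (f ^^ (k + l)) x = (f ^^ k) x"
    unfolding returns_def l_def by (rule LeastI_ex)
  have l_minimal: "l \<le> r" if "1 \<le> r" "(f ^^ (k + r)) x = (f ^^ k) x" for r
    unfolding l_def using that by (intro Least_le conjI)
  have "k \<le> k' \<and> l dvd l' \<longleftrightarrow> (f ^^ k') x = (f ^^ (k' + l')) x" if "1 \<le> l'" for k' l'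
  proof
    assume "k \<le> k' \<and> l dvd l'"
    then obtain q where "k \<le> k'" "l' = q * l"
      by (metis dvd_def mult.commute)
    then show "(f ^^ k') x = (f ^^ (k' + l')) x"
      using funpow_periodic[where f=f and x=x and a=k and l=l and b=k' and q=q] l by simp
  next
    assume return: "(f ^^ k') x = (f ^^ (k' + l')) x"
    then have "returns k'"
      unfolding returns_def using that by auto
    then have "k \<le> k'"
      unfolding k_def by (rule Least_le)
    moreover have "l dvd l'"
      using funpow_cycle_length_dvd[OF _ _ l_minimal \<open>k \<le> k'\<close> return[symmetric]] l by blast
    ultimately show "k \<le> k' \<and> l dvd l'" ..
  qed
  then show ?thesis
    unfolding is_tail_cycle_def using l by blast
qed

lemma is_tail_cycle_tail_cycle:
  fixes f :: "'a \<Rightarrow> 'a"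
  assumes "finite (range (\<lambda>i. (f ^^ i) x))"
  shows "is_tail_cycle f x (fst (tail_cycle f x)) (snd (tail_cycle f x))"
  using is_tail_cycle_exists[OF assms] tail_cycle_eqI by fastforce

lemma funpow_eq_if_is_tail_cycle:
  fixes f :: "'a \<Rightarrow> 'a"
  assumes rel: "is_tail_cycle f x k l" and "k \<le> a" "k \<le> b" "[a = b] (mod l)"
  shows "(f ^^ a) x = (f ^^ b) x"
proof -
  have "(f ^^ a) x = (f ^^ b) x" if "k \<le> a" "a < b" "[b = a] (mod l)" for a b
  proof -
    have "l dvd b - a" "1 \<le> b - a"
      using that cong_altdef_nat by auto
    then have "(f ^^ a) x = (f ^^ (a + (b - a))) x"
      using rel \<open>k \<le> a\<close> unfolding is_tail_cycle_def by blast
    then show ?thesis using \<open>a < b\<close> by simp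
  qed
  then show ?thesis
    using assms(2-4) by (metis cong_sym_eq linorder_neqE_nat)
qed

lemma finite_range_funpow:
  fixes f :: "'a \<Rightarrow> 'a"
  assumes "finite F" "f ` F \<subseteq> F" "x \<in> F"
  shows "finite (range (\<lambda>i. (f ^^ i) x))"
proof -
  have "(f ^^ i) x \<in> F" for i
  proof (induction i)
    case (Suc i)
    then show ?case
      using assms(2) by (auto simp: image_subset_iff)
  qed (simp add: assms(3))
  then have "range (\<lambda>i. (f ^^ i) x) \<subseteq> F"
    by auto
  then show ?thesis
    using assms(1) by (rule finite_subset)
qed

lemma funpow_eq_beyond_preperiod:
  fixes f :: "'a \<Rightarrow> 'a"
  assumes "finite F" "f ` F \<subseteq> F" "x \<in> F"
    and "preperiod_length f F \<le> a" "preperiod_length f F \<le> b"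
    and "[a = b] (mod period_of f F)"
  shows "(f ^^ a) x = (f ^^ b) x"
proof (rule funpow_eq_if_is_tail_cycle)
  show "is_tail_cycle f x (fst (tail_cycle f x)) (snd (tail_cycle f x))"
    using assms(1-3) by (intro is_tail_cycle_tail_cycle finite_range_funpow)
  have "fst (tail_cycle f x) \<le> preperiod_length f F"
    unfolding preperiod_length_def using assms(1,3) by (intro Max_ge) auto
  then show "fst (tail_cycle f x) \<le> a" "fst (tail_cycle f x) \<le> b"
    using assms(4,5) by linarith+
  have "snd (tail_cycle f x) dvd period_of f F"
    unfolding period_of_def using assms(3) by (intro dvd_Lcm) auto
  then show "[a = b] (mod snd (tail_cycle f x))"
    using assms(6) cong_dvd_modulus_nat by blast
qed

lemma Rep_zhat_bounds:
  assumes "0 < n"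
  shows "0 \<le> Rep_zhat x n" "Rep_zhat x n < int n"
  using Rep_zhat[of x] assms by auto

lemma Rep_zhat_of_int:
  assumes "0 < n"
  shows "Rep_zhat (zhat_of_int a) n = a mod int n"
proof -
  have "(\<lambda>n. if n = 0 then 0 else a mod int n) \<in> {x. x 0 = 0 \<and> (\<forall>n>0. 0 \<le> x n \<and> x n < int n) \<and>
     (\<forall>m n. 0 < m \<and> 0 < n \<and> n dvd m \<longrightarrow> x m mod int n = x n)}"
    by (auto simp: mod_mod_cancel)
  then show ?thesis
    unfolding zhat_of_int_def using assms by (simp add: Abs_zhat_inverse)
qed

lemma zcong_funpow_period_map:
  assumes "period_map f P" "0 < n" "zcong ((P ^^ i) n) s t"
  shows "zcong n ((f ^^ i) s) ((f ^^ i) t)"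
  using assms(2,3)
proof (induction i arbitrary: n)
  case (Suc i)
  have "0 < P n"
    using Suc.prems(1) assms(1) unfolding period_map_def by blast
  moreover have "zcong ((P ^^ i) (P n)) s t"
    using Suc.prems(2) by (simp only: funpow_Suc_right comp_apply)
  ultimately have "zcong (P n) ((f ^^ i) s) ((f ^^ i) t)"
    by (rule Suc.IH)
  then show ?case
    using Suc.prems(1) assms(1) unfolding period_map_def by simp
qed simp

lemma Rep_zhat_funpow_reduction:
  assumes "period_map f P" "0 < m" "P m = m"
  shows "Rep_zhat ((f ^^ j) x) m = (reduction f m ^^ j) (Rep_zhat x m)"
proof (induction j)
  case (Suc j)
  have "Rep_zhat (f y) m = reduction f m (Rep_zhat y m)" for y
  proof -
    have "zcong (P m) y (zhat_of_int (Rep_zhat y m))"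
      unfolding zcong_def assms(3) using Rep_zhat_of_int Rep_zhat_bounds assms(2) by simp
    then have "zcong m (f y) (f (zhat_of_int (Rep_zhat y m)))"
      using assms(1,2) unfolding period_map_def by blast
    then show ?thesis
      unfolding zcong_def reduction_def .
  qed
  with Suc show ?case by simp
qed simp

lemma reduction_image:
  assumes "0 < m"
  shows "reduction f m ` {0..<int m} \<subseteq> {0..<int m}"
  unfolding reduction_def using Rep_zhat_bounds[OF assms] by auto

theorem lemma3p6:
  fixes f :: "zhat \<Rightarrow> zhat" and P :: "nat \<Rightarrow> nat" and k m n :: nat
  assumes cont: "continuous_on UNIV f"
    and per: "period_map f P"
    and pos: "0 < k" "0 < m" "0 < n"
    and m1: "m = (P ^^ k) n" and m2: "m = (P ^^ (k + 1)) n"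
  defines "K \<equiv> preperiod_length (reduction f m) {0..<int m}"
    and "L \<equiv> period_of (reduction f m) {0..<int m}"
  shows "\<forall>s t u v. 0 < u \<longrightarrow> 0 < v \<longrightarrow> zcong m s t \<longrightarrow> k + K \<le> u \<longrightarrow> k + K \<le> v
           \<longrightarrow> u mod L = v mod L \<longrightarrow> zcong n ((f ^^ u) s) ((f ^^ v) t)"
proof (intro allI impI)
  fix s t u v
  assume st: "zcong m s t" and u: "k + K \<le> u" and v: "k + K \<le> v" and "u mod L = v mod L"
  have "P m = m"
    using m1 m2 by simp
  have "[u - k = v - k] (mod L)"
    using \<open>u mod L = v mod L\<close> u v by (intro cong_diff_nat) (simp_all add: cong_def)
  moreover have "Rep_zhat s m \<in> {0..<int m}"
    using Rep_zhat_bounds[OF pos(2)] by simp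
  ultimately have "(reduction f m ^^ (u - k)) (Rep_zhat s m) = (reduction f m ^^ (v - k)) (Rep_zhat s m)"
    using u v unfolding K_def L_def
    by (intro funpow_eq_beyond_preperiod[OF finite_atLeastLessThan_int reduction_image[OF pos(2)]])
      simp_all
  then have "zcong m ((f ^^ (u - k)) s) ((f ^^ (v - k)) t)"
    using st unfolding zcong_def Rep_zhat_funpow_reduction[OF per pos(2) \<open>P m = m\<close>] by simp
  then have "zcong n ((f ^^ k) ((f ^^ (u - k)) s)) ((f ^^ k) ((f ^^ (v - k)) t))"
    using zcong_funpow_period_map[OF per pos(3)] m1 by simp
  moreover have "k \<le> u" "k \<le> v"
    using u v by simp_all
  ultimately show "zcong n ((f ^^ u) s) ((f ^^ v) t)"
    by (simp only: funpow_add_diff[of k u f s] funpow_add_diff[of k v f t])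
qed

end
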